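(* Let $p$ be an odd prime and $q\in\mathbb C_p$ with $|1-q|_p<p^{-1/(p-1)}$. For $k,n\in\mathbb Z_+$ with $k\le n$, $$\int_{\mathbb Z_p}B_{k,n}(x,q)\,d\mu_{-1}(x)=\sum_{j=k}^n\sum_{m=0}^\infty\binom jk\binom nj\binom{j-k+m-1}{m}(-1)^{j-k+m}q^{j-k}(q-1)^mE_{m+j,q}.$$
   Context: For $x\in\mathbb Z_p$, $[x]_q=\frac{1-q^x}{1-q}$. The modified $q$-Bernstein polynomials are $B_{k,n}(x,q)=\binom nk[x]_q^k[1-x]_q^{n-k}$ for $0\le k\le n$. The fermionic $p$-adic integral is $\int_{\mathbb Z_p}f(x)\,d\mu_{-1}(x)=\lim_{N\to\infty}\sum_{x=0}^{p^N-1}f(x)(-1)^x$, and $E_{n,q}=\int_{\mathbb Z_p}[x]_q^n\,d\mu_{-1}(x)$ are the $q$-Euler numbers. Binomial coefficients $\binom{a}{m}$ are the generalized ones (so $\binom{-1}{0}=1$, $\binom{m-1}{m}=0$ for $m\ge1$). *)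

theory Defs
  imports Complex_Main "HOL-Computational_Algebra.Polynomial"
begin

text \<open>An absolute value nv on a field 'a (char 0) realising a model of C_p:
  a non-archimedean, complete absolute value with |p| = 1/p, on an algebraically closed field.\<close>

definition av_tendsto :: "('a::field \<Rightarrow> real) \<Rightarrow> (nat \<Rightarrow> 'a) \<Rightarrow> 'a \<Rightarrow> bool" where
  "av_tendsto nv f L \<longleftrightarrow> (\<forall>e>0. \<exists>N. \<forall>n\<ge>N. nv (f n - L) < e)"

definition av_cauchy :: "('a::field \<Rightarrow> real) \<Rightarrow> (nat \<Rightarrow> 'a) \<Rightarrow> bool" where
  "av_cauchy nv f \<longleftrightarrow> (\<forall>e>0. \<exists>N. \<forall>m\<ge>N. \<forall>n\<ge>N. nv (f m - f n) < e)"

definition is_Cp_abs :: "nat \<Rightarrow> ('a::field_char_0 \<Rightarrow> real) \<Rightarrow> bool" where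
  "is_Cp_abs p nv \<longleftrightarrow>
     (\<forall>x. nv x \<ge> 0) \<and> (\<forall>x. nv x = 0 \<longleftrightarrow> x = 0) \<and>
     (\<forall>x y. nv (x * y) = nv x * nv y) \<and>
     (\<forall>x y. nv (x + y) \<le> max (nv x) (nv y)) \<and>
     nv (of_nat p) = 1 / real p \<and>
     (\<forall>f. av_cauchy nv f \<longrightarrow> (\<exists>L. av_tendsto nv f L)) \<and>
     (\<forall>P :: 'a poly. degree P > 0 \<longrightarrow> (\<exists>z. poly P z = 0))"

definition av_lim :: "('a::field \<Rightarrow> real) \<Rightarrow> (nat \<Rightarrow> 'a) \<Rightarrow> 'a" where
  "av_lim nv f = (THE L. av_tendsto nv f L)"

definition av_suminf :: "('a::field \<Rightarrow> real) \<Rightarrow> (nat \<Rightarrow> 'a) \<Rightarrow> 'a" where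
  "av_suminf nv f = av_lim nv (\<lambda>M. \<Sum>m<M. f m)"

text \<open>q-number [x]_q = (1 - q^x)/(1 - q) (only needed at integers x).\<close>
definition qnum :: "'a::field \<Rightarrow> int \<Rightarrow> 'a" where
  "qnum q x = (1 - q powi x) / (1 - q)"

definition qBernstein :: "nat \<Rightarrow> nat \<Rightarrow> int \<Rightarrow> 'a::field \<Rightarrow> 'a" where
  "qBernstein k n x q = of_nat (n choose k) * qnum q x ^ k * qnum q (1 - x) ^ (n - k)"

definition fermionic_int :: "nat \<Rightarrow> ('a::field \<Rightarrow> real) \<Rightarrow> (int \<Rightarrow> 'a) \<Rightarrow> 'a" where
  "fermionic_int p nv f = av_lim nv (\<lambda>N. \<Sum>x<p ^ N. f (int x) * (-1) ^ x)"

definition qEuler :: "nat \<Rightarrow> ('a::field \<Rightarrow> real) \<Rightarrow> 'a \<Rightarrow> nat \<Rightarrow> 'a" where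
  "qEuler p nv q n = fermionic_int p nv (\<lambda>x. qnum q x ^ n)"

end

theory Submission
  imports Defs "HOL-Computational_Algebra.Primes"
begin

text \<open>Writing [1 - x]_q = 1 - q [x]_q q^-x and expanding binomially, the q-Bernstein polynomial
  becomes a finite sum of terms [x]_q^j (-q)^(j-k) q^(-x(j-k)). Since q^x = 1 - t with
  t = (1 - q) [x]_q and |t| \<le> |1 - q| < 1, each power q^(-x l) = (1 - t)^-l is a negative
  binomial series in t whose M-th remainder is bounded by |1 - q|^M uniformly in x. The
  fermionic Riemann sums of [x]_q^n converge because |1 - q^(p^K)| decays geometrically in K
  (p divides the inner binomial coefficients p choose i), which defines the q-Euler numbers, and
  the uniform remainder bound lets the limit of the Riemann sums be exchanged with the series.\<close>

section \<open>Ultrametric absolute values and limits\<close>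

locale ultrametric_abs =
  fixes nv :: "'a::field \<Rightarrow> real"
  assumes nv_nonneg: "nv x \<ge> 0"
    and nv_eq_0_iff: "nv x = 0 \<longleftrightarrow> x = 0"
    and nv_mult: "nv (x * y) = nv x * nv y"
    and nv_add_le_max: "nv (x + y) \<le> max (nv x) (nv y)"
    and complete: "av_cauchy nv f \<Longrightarrow> \<exists>L. av_tendsto nv f L"
begin

lemma nv_0 [simp]: "nv 0 = 0"
  using nv_eq_0_iff by simp

lemma nv_1 [simp]: "nv 1 = 1"
  using nv_mult[of 1 1] nv_eq_0_iff[of 1] by simp

lemma nv_minus [simp]: "nv (- x) = nv x"
proof -
  have "nv (-1) * nv (-1) = 1"
    using nv_mult[of "-1" "-1"] by simp
  then have "nv (-1) = 1"
    using nv_nonneg[of "-1"] power2_eq_1_iff[of "nv (-1)"] by (auto simp: power2_eq_square)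
  then show ?thesis
    using nv_mult[of "-1" x] by simp
qed

lemma nv_power [simp]: "nv (x ^ n) = nv x ^ n"
  by (induction n) (simp_all add: nv_mult)

lemma nv_divide: "nv (x / y) = nv x / nv y"
proof (cases "y = 0")
  case False
  then show ?thesis
    using nv_mult[of "x / y" y] nv_eq_0_iff[of y] by (simp add: eq_divide_eq)
qed simp

lemma nv_inverse: "nv (inverse x) = inverse (nv x)"
  using nv_divide[of 1 x] by (simp add: inverse_eq_divide)

lemma nv_diff_commute: "nv (x - y) = nv (y - x)"
  by (metis nv_minus minus_diff_eq)

lemma nv_diff_triangle: "nv (a - c) \<le> max (nv (a - b)) (nv (b - c))"
  using nv_add_le_max[of "a - b" "b - c"] by simp

lemma nv_add_less: "nv x < e \<Longrightarrow> nv y < e \<Longrightarrow> nv (x + y) < e"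
  using nv_add_le_max[of x y] by linarith

lemma nv_diff_less_trans: "nv (a - b) < e \<Longrightarrow> nv (b - c) < e \<Longrightarrow> nv (a - c) < e"
  using nv_add_less[of "a - b" e "b - c"] by simp

lemma nv_add_eq_right: "nv a < nv b \<Longrightarrow> nv (a + b) = nv b"
  using nv_add_le_max[of a b] nv_add_le_max[of "a + b" "- a"] by simp

lemma nv_of_nat_le_1: "nv (of_nat n) \<le> 1"
proof (induction n)
  case (Suc n)
  then show ?case
    using nv_add_le_max[of 1 "of_nat n"] by (simp add: add.commute)
qed simp

lemma nv_sum_le:
  assumes "\<And>i. i \<in> A \<Longrightarrow> nv (f i) \<le> b" and "0 \<le> b"
  shows "nv (sum f A) \<le> b"
  using assms
proof (induction A rule: infinite_finite_induct)
  case (insert x F)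
  then have "nv (f x) \<le> b" and "nv (sum f F) \<le> b"
    by auto
  then show ?case
    using nv_add_le_max[of "f x" "sum f F"] insert(1,2) by simp
qed auto

lemma nv_power_diff_le:
  assumes "nv a \<le> 1" and "nv b \<le> 1"
  shows "nv (a ^ n - b ^ n) \<le> nv (a - b)"
proof -
  have "nv (\<Sum>i<n. b ^ (n - Suc i) * a ^ i) \<le> 1"
    by (rule nv_sum_le) (use assms nv_nonneg in \<open>auto simp: nv_mult power_le_one mult_le_one\<close>)
  then show ?thesis
    unfolding power_diff_sumr2[of a n b] nv_mult
    using nv_nonneg[of "a - b"] by (simp add: mult_left_le)
qed

lemma av_tendsto_unique:
  assumes "av_tendsto nv f L1" and "av_tendsto nv f L2"
  shows "L1 = L2"
proof -
  have "nv (L1 - L2) < e" if "e > 0" for e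
  proof -
    obtain n1 where n1: "\<forall>n\<ge>n1. nv (f n - L1) < e"
      using assms(1) \<open>e > 0\<close> unfolding av_tendsto_def by blast
    obtain n2 where n2: "\<forall>n\<ge>n2. nv (f n - L2) < e"
      using assms(2) \<open>e > 0\<close> unfolding av_tendsto_def by blast
    have "nv (L1 - f (max n1 n2)) < e"
      using n1 nv_diff_commute[of L1] by simp
    moreover have "nv (f (max n1 n2) - L2) < e"
      using n2 by simp
    ultimately show ?thesis
      by (rule nv_diff_less_trans)
  qed
  from this[of "nv (L1 - L2)"] have "nv (L1 - L2) = 0"
    using nv_nonneg[of "L1 - L2"] by fastforce
  then show ?thesis
    by (simp add: nv_eq_0_iff)
qed

lemma av_lim_eq: "av_tendsto nv f L \<Longrightarrow> av_lim nv f = L"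
  unfolding av_lim_def using av_tendsto_unique by blast

lemma av_tendsto_const: "av_tendsto nv (\<lambda>n. c) c"
  unfolding av_tendsto_def by simp

lemma av_tendsto_add:
  assumes "av_tendsto nv f a" and "av_tendsto nv g b"
  shows "av_tendsto nv (\<lambda>n. f n + g n) (a + b)"
  unfolding av_tendsto_def
proof (intro allI impI)
  fix e :: real
  assume "e > 0"
  obtain n1 where n1: "\<forall>n\<ge>n1. nv (f n - a) < e"
    using assms(1) \<open>e > 0\<close> unfolding av_tendsto_def by blast
  obtain n2 where n2: "\<forall>n\<ge>n2. nv (g n - b) < e"
    using assms(2) \<open>e > 0\<close> unfolding av_tendsto_def by blast
  have "nv (f n + g n - (a + b)) < e" if "n \<ge> max n1 n2" for n
    using nv_add_less[of "f n - a" e "g n - b"] n1 n2 that by (simp add: algebra_simps)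
  then show "\<exists>M. \<forall>n\<ge>M. nv (f n + g n - (a + b)) < e"
    by blast
qed

lemma av_tendsto_mult_left:
  assumes "av_tendsto nv f a"
  shows "av_tendsto nv (\<lambda>n. c * f n) (c * a)"
proof (cases "c = 0")
  case True
  then show ?thesis
    by (simp add: av_tendsto_const)
next
  case False
  then have c: "nv c > 0"
    using nv_nonneg[of c] nv_eq_0_iff[of c] by simp
  show ?thesis
    unfolding av_tendsto_def
  proof (intro allI impI)
    fix e :: real
    assume "e > 0"
    then obtain n1 where "\<forall>n\<ge>n1. nv (f n - a) < e / nv c"
      using assms c unfolding av_tendsto_def by (meson divide_pos_pos)
    moreover have "nv (c * f n - c * a) = nv c * nv (f n - a)" for n
      by (simp add: nv_mult flip: right_diff_distrib)
    ultimately have "\<forall>n\<ge>n1. nv (c * f n - c * a) < e"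
      using c by (simp add: pos_less_divide_eq mult.commute)
    then show "\<exists>M. \<forall>n\<ge>M. nv (c * f n - c * a) < e"
      by blast
  qed
qed

lemma av_tendsto_sum:
  assumes "\<And>i. i \<in> A \<Longrightarrow> av_tendsto nv (f i) (a i)"
  shows "av_tendsto nv (\<lambda>n. \<Sum>i\<in>A. f i n) (\<Sum>i\<in>A. a i)"
  using assms
proof (induction A rule: infinite_finite_induct)
  case (insert x F)
  then show ?case
    using av_tendsto_add[of "f x" "a x"] by simp
qed (simp_all add: av_tendsto_const)

lemma av_tendsto_dist_le:
  assumes "av_tendsto nv f L" and "\<And>n. n \<ge> n0 \<Longrightarrow> nv (f n - a) \<le> b"
  shows "nv (L - a) \<le> b"
proof (rule ccontr)
  assume contra: "\<not> ?thesis"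
  then have "nv (L - a) > 0"
    using assms(2)[of n0] nv_nonneg[of "f n0 - a"] by linarith
  then obtain n1 where n1: "\<forall>n\<ge>n1. nv (f n - L) < nv (L - a)"
    using assms(1) unfolding av_tendsto_def by blast
  have "nv (L - f (max n0 n1)) < nv (L - a)"
    using n1 nv_diff_commute[of L] by simp
  moreover have "nv (f (max n0 n1) - a) < nv (L - a)"
    using assms(2)[of "max n0 n1"] contra by simp
  ultimately show False
    using nv_diff_less_trans by blast
qed

lemma av_tendsto_geometric:
  assumes "\<And>n. nv (f (Suc n) - f n) \<le> c * \<rho> ^ n" and "0 \<le> \<rho>" and "\<rho> < 1" and "0 \<le> c"
  shows "\<exists>L. av_tendsto nv f L \<and> (\<forall>n. nv (L - f n) \<le> c * \<rho> ^ n)"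
proof -
  have decay: "c * \<rho> ^ m \<le> c * \<rho> ^ n" if "n \<le> m" for m n
    using that assms by (simp add: mult_left_mono power_decreasing)
  have dist: "nv (f m - f n) \<le> c * \<rho> ^ n" if "n \<le> m" for m n
    using that
  proof (induction m rule: dec_induct)
    case (step m)
    then show ?case
      using nv_diff_triangle[of "f (Suc m)" "f n" "f m"] assms(1)[of m] decay[of n m] by linarith
  qed (simp add: assms)
  have "av_cauchy nv f"
    unfolding av_cauchy_def
  proof (intro allI impI)
    fix e :: real
    assume "e > 0"
    then obtain K where K: "\<rho> ^ K < e / (c + 1)"
      using real_arch_pow_inv[of "e / (c + 1)" \<rho>] assms by auto
    have "c * \<rho> ^ K < e"
      using K assms mult_right_mono[of c "c + 1" "\<rho> ^ K"]
      by (simp add: pos_less_divide_eq mult.commute)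
    have close: "nv (f m - f n) < e" if "n \<le> m" "K \<le> n" for m n
      using dist[OF that(1)] decay[OF that(2)] \<open>c * \<rho> ^ K < e\<close> by linarith
    have "nv (f m - f n) < e" if "m \<ge> K" "n \<ge> K" for m n
    proof (cases "n \<le> m")
      case False
      then have "m \<le> n"
        by simp
      then show ?thesis
        using close[OF _ that(1)] nv_diff_commute[of "f m" "f n"] by simp
    qed (use close that in simp)
    then show "\<exists>M. \<forall>m\<ge>M. \<forall>n\<ge>M. nv (f m - f n) < e"
      by blast
  qed
  then obtain L where L: "av_tendsto nv f L"
    using complete by blast
  moreover have "nv (L - f n) \<le> c * \<rho> ^ n" for n
    by (rule av_tendsto_dist_le[OF L, of n]) (use dist in auto)
  ultimately show ?thesis
    by blast
qed

lemma av_suminf_geometric: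
  assumes "\<And>m. nv (f m) \<le> c * \<rho> ^ m" and "0 \<le> \<rho>" and "\<rho> < 1" and "0 \<le> c"
  shows "nv (av_suminf nv f - (\<Sum>m<M. f m)) \<le> c * \<rho> ^ M"
proof -
  obtain L where L: "av_tendsto nv (\<lambda>M. \<Sum>m<M. f m) L"
    and bound: "\<forall>M. nv (L - (\<Sum>m<M. f m)) \<le> c * \<rho> ^ M"
    using av_tendsto_geometric[of "\<lambda>M. \<Sum>m<M. f m" c \<rho>] assms by auto
  have "av_suminf nv f = L"
    unfolding av_suminf_def using L by (rule av_lim_eq)
  then show ?thesis
    using bound by simp
qed

lemma av_tendsto_uniform_approx:
  assumes "\<And>M K. nv (f K - g M K) \<le> \<epsilon> M"
    and "\<And>M. av_tendsto nv (g M) (a M)"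
    and "\<And>M. nv (L - a M) \<le> \<epsilon> M"
    and "\<And>e. e > 0 \<Longrightarrow> \<exists>M. \<epsilon> M < e"
  shows "av_tendsto nv f L"
  unfolding av_tendsto_def
proof (intro allI impI)
  fix e :: real
  assume "e > 0"
  then obtain M where M: "\<epsilon> M < e"
    using assms(4) by blast
  obtain K0 where K0: "\<forall>K\<ge>K0. nv (g M K - a M) < e"
    using assms(2)[of M] \<open>e > 0\<close> unfolding av_tendsto_def by blast
  have "nv (f K - L) < e" if "K \<ge> K0" for K
  proof (rule nv_diff_less_trans)
    show "nv (f K - g M K) < e"
      using assms(1)[of K M] M by simp
    have "nv (a M - L) < e"
      using assms(3)[of M] M nv_diff_commute[of L "a M"] by simp
    then show "nv (g M K - L) < e"
      using K0 that by (intro nv_diff_less_trans[of "g M K" "a M" e L]) simp_all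
  qed
  then show "\<exists>N. \<forall>K\<ge>N. nv (f K - L) < e"
    by blast
qed

end

section \<open>The negative binomial series\<close>

text \<open>The coefficient of t^m in (1 - t)^-l is (l + m - 1 choose m); for l = 0 the truncated
  subtraction still yields the correct coefficient [m = 0].\<close>

definition neg_binomial_sum :: "'a::comm_ring_1 \<Rightarrow> nat \<Rightarrow> nat \<Rightarrow> 'a" where
  "neg_binomial_sum t l M = (\<Sum>m<M. of_nat ((l + m - 1) choose m) * t ^ m)"

lemma sum_neg_binomial_coeffs: "(\<Sum>i\<le>M. (l + i - 1) choose i) = (l + M) choose M"
  by (induction M) simp_all

lemma neg_binomial_sum_Suc:
  "(1 - t) * neg_binomial_sum t (Suc l) M
     = neg_binomial_sum t l M - t ^ M * of_nat (\<Sum>i<M. (l + i - 1) choose i)"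
proof (induction M)
  case (Suc M)
  define S where "S = (\<Sum>i<M. (l + i - 1) choose i)"
  have coeff: "(Suc l + M - 1) choose M = ((l + M - 1) choose M) + S"
    using sum_neg_binomial_coeffs[of l M] unfolding S_def by (simp add: lessThan_Suc_atMost[symmetric])
  have "(1 - t) * neg_binomial_sum t (Suc l) (Suc M)
      = (1 - t) * neg_binomial_sum t (Suc l) M + (1 - t) * of_nat ((Suc l + M - 1) choose M) * t ^ M"
    by (simp add: neg_binomial_sum_def algebra_simps)
  also have "\<dots> = neg_binomial_sum t l M - t ^ M * of_nat S
      + (1 - t) * (of_nat ((l + M - 1) choose M) + of_nat S) * t ^ M"
    using Suc unfolding coeff S_def by simp
  also have "\<dots> = neg_binomial_sum t l (Suc M) - t ^ Suc M * of_nat (\<Sum>i<Suc M. (l + i - 1) choose i)"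
    unfolding S_def by (simp add: neg_binomial_sum_def algebra_simps)
  finally show ?case .
qed (simp add: neg_binomial_sum_def)

context ultrametric_abs
begin

lemma nv_inverse_power_minus_neg_binomial_sum:
  assumes "nv t < 1"
  shows "nv (inverse ((1 - t) ^ l) - neg_binomial_sum t l M) \<le> nv t ^ M"
proof (induction l)
  case 0
  have "neg_binomial_sum t 0 M = (\<Sum>m<M. if m = 0 then 1 else 0)"
    unfolding neg_binomial_sum_def by (rule sum.cong) (auto simp: binomial_eq_0)
  then show ?case
    using nv_nonneg[of t] by (cases M) auto
next
  case (Suc l)
  have nv_1_minus_t: "nv (1 - t) = 1"
    using nv_add_eq_right[of "- t" 1] assms by simp
  then have "1 - t \<noteq> 0"
    by force
  define c :: 'a where "c = of_nat (\<Sum>i<M. (l + i - 1) choose i)"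
  have "neg_binomial_sum t (Suc l) M = (neg_binomial_sum t l M - t ^ M * c) / (1 - t)"
    using neg_binomial_sum_Suc[of t l M] \<open>1 - t \<noteq> 0\<close> unfolding c_def
    by (simp add: field_simps)
  then have "inverse ((1 - t) ^ Suc l) - neg_binomial_sum t (Suc l) M
      = ((inverse ((1 - t) ^ l) - neg_binomial_sum t l M) + t ^ M * c) / (1 - t)"
    using \<open>1 - t \<noteq> 0\<close> by (simp add: diff_divide_distrib add_divide_distrib inverse_eq_divide)
  then have "nv (inverse ((1 - t) ^ Suc l) - neg_binomial_sum t (Suc l) M)
      = nv ((inverse ((1 - t) ^ l) - neg_binomial_sum t l M) + t ^ M * c)"
    using nv_1_minus_t by (simp add: nv_divide)
  also have "\<dots> \<le> nv t ^ M"
  proof -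
    have "nv c \<le> 1"
      unfolding c_def by (rule nv_of_nat_le_1)
    then have "nv (t ^ M * c) \<le> nv t ^ M"
      using nv_nonneg[of t] by (simp add: nv_mult mult_left_le)
    then show ?thesis
      using nv_add_le_max[of "inverse ((1 - t) ^ l) - neg_binomial_sum t l M" "t ^ M * c"] Suc
      by linarith
  qed
  finally show ?case .
qed

end

section \<open>Expansion of the q-Bernstein polynomials\<close>

lemma one_minus_powi_eq_qnum: "q \<noteq> 1 \<Longrightarrow> 1 - q powi x = (1 - q) * qnum q x"
  by (simp add: qnum_def)

lemma qnum_1_minus:
  assumes "q \<noteq> 0" and "q \<noteq> 1"
  shows "qnum q (1 - x) = 1 - q * qnum q x * inverse (q powi x)"
proof -
  have "q powi (1 - x) = q / q powi x"
    using power_int_diff[of q 1 x] assms by simp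
  then show ?thesis
    unfolding qnum_def using assms by (simp add: field_simps)
qed

lemma qBernstein_expand:
  fixes q :: "'a::field"
  assumes "k \<le> n" and "q \<noteq> 0" and "q \<noteq> 1"
  shows "qBernstein k n x q = (\<Sum>j=k..n. of_nat (j choose k) * of_nat (n choose j)
      * qnum q x ^ j * (- q) ^ (j - k) * inverse (q powi x) ^ (j - k))"
proof -
  define X where "X = qnum q x"
  define a where "a = - q * inverse (q powi x)"
  have "qBernstein k n x q = of_nat (n choose k) * X ^ k * (a * X + 1) ^ (n - k)"
    unfolding qBernstein_def X_def a_def qnum_1_minus[OF assms(2,3)] by (simp add: mult_ac)
  also have "\<dots> = (\<Sum>l\<le>n - k. of_nat (n choose k) * of_nat ((n - k) choose l) * X ^ (l + k) * a ^ l)"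
    by (simp add: binomial_ring sum_distrib_left power_add power_mult_distrib mult_ac)
  also have "\<dots> = (\<Sum>l=0..n - k. of_nat ((l + k) choose k) * of_nat (n choose (l + k)) * X ^ (l + k) * a ^ l)"
    unfolding atMost_atLeast0
  proof (rule sum.cong)
    fix l
    assume "l \<in> {0..n - k}"
    then have "(n choose (l + k)) * ((l + k) choose k) = (n choose k) * ((n - k) choose l)"
      using choose_mult[of k "l + k" n] assms(1) by simp
    then show "of_nat (n choose k) * of_nat ((n - k) choose l) * X ^ (l + k) * a ^ l
        = of_nat ((l + k) choose k) * of_nat (n choose (l + k)) * X ^ (l + k) * (a ^ l :: 'a)"
      by (metis (mono_tags, lifting) mult.commute of_nat_mult)
  qed simp
  also have "\<dots> = (\<Sum>j=k..n. of_nat (j choose k) * of_nat (n choose j) * X ^ j * a ^ (j - k))"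
    using sum.shift_bounds_cl_nat_ivl[of "\<lambda>j. of_nat (j choose k) * of_nat (n choose j) * X ^ j * a ^ (j - k)" 0 k "n - k"]
      assms(1) by simp
  finally show ?thesis
    unfolding X_def a_def power_mult_distrib by (simp only: mult.assoc)
qed

text \<open>The coefficient of E_(m+j,q) in the theorem, with the generalized binomial coefficient
  (j - k + m - 1 over m) written as a natural-number one (see gchoose_of_int_eq_choose).\<close>

definition euler_coeff :: "'a::field \<Rightarrow> nat \<Rightarrow> nat \<Rightarrow> nat \<Rightarrow> nat \<Rightarrow> 'a" where
  "euler_coeff q k n j m = of_nat (j choose k) * of_nat (n choose j) * of_nat ((j - k + m - 1) choose m)
     * (-1) ^ (j - k + m) * q ^ (j - k) * (q - 1) ^ m"

lemma sum_euler_coeff: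
  "(\<Sum>m<M. euler_coeff q k n j m * X ^ (m + j))
     = of_nat (j choose k) * of_nat (n choose j) * X ^ j * (- q) ^ (j - k)
       * neg_binomial_sum ((1 - q) * X) (j - k) M"
  unfolding neg_binomial_sum_def sum_distrib_left
proof (rule sum.cong)
  fix m
  have "(1 - q) ^ m = (-1) ^ m * (q - 1) ^ m"
    by (metis minus_diff_eq power_minus)
  then have "(-1) ^ (j - k + m) * q ^ (j - k) * (q - 1) ^ m * X ^ m = (- q) ^ (j - k) * ((1 - q) * X) ^ m"
    by (simp add: power_add power_mult_distrib power_minus[of q] mult_ac)
  then show "euler_coeff q k n j m * X ^ (m + j) = of_nat (j choose k) * of_nat (n choose j) * X ^ j
      * (- q) ^ (j - k) * (of_nat ((j - k + m - 1) choose m) * ((1 - q) * X) ^ m)"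
    unfolding euler_coeff_def by (simp add: power_add mult_ac)
qed simp

locale ultrametric_q = ultrametric_abs nv for nv :: "'a::field \<Rightarrow> real" +
  fixes q :: 'a
  assumes q_neq_1: "q \<noteq> 1" and nv_1_minus_q_less_1: "nv (1 - q) < 1"
begin

lemma nv_q [simp]: "nv q = 1"
  using nv_add_eq_right[of "q - 1" 1] nv_1_minus_q_less_1 nv_diff_commute[of q 1] by simp

lemma q_neq_0: "q \<noteq> 0"
  using nv_q nv_0 by fastforce

lemma nv_1_minus_q_pos: "nv (1 - q) > 0"
  using q_neq_1 nv_eq_0_iff[of "1 - q"] nv_nonneg[of "1 - q"] by auto

lemma nv_1_minus_q_power_le: "nv (1 - q ^ m) \<le> nv (1 - q)"
proof -
  have "nv (\<Sum>i<m. q ^ i) \<le> 1"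
    by (rule nv_sum_le) auto
  then show ?thesis
    unfolding one_diff_power_eq nv_mult using nv_nonneg[of "1 - q"] by (simp add: mult_left_le)
qed

lemma nv_1_minus_q_powi_le: "nv (1 - q powi z) \<le> nv (1 - q)"
proof (cases "z \<ge> 0")
  case True
  then show ?thesis
    using nv_1_minus_q_power_le[of "nat z"] by (simp add: power_int_def)
next
  case False
  define u where "u = q ^ nat (- z)"
  have "u \<noteq> 0"
    unfolding u_def using q_neq_0 by simp
  have "1 - q powi z = (u - 1) * inverse u"
    using False \<open>u \<noteq> 0\<close> unfolding u_def by (simp add: power_int_def power_inverse field_simps)
  then have "nv (1 - q powi z) = nv (1 - u)"
    using nv_diff_commute[of u 1] by (simp add: nv_mult nv_inverse u_def)
  then show ?thesis
    using nv_1_minus_q_power_le unfolding u_def by simp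
qed

lemma nv_qnum_le_1: "nv (qnum q z) \<le> 1"
  unfolding qnum_def using nv_1_minus_q_powi_le[of z] nv_1_minus_q_pos by (simp add: nv_divide)

lemma nv_qBernstein_minus_truncation_le:
  assumes "k \<le> n"
  shows "nv (qBernstein k n x q - (\<Sum>j=k..n. \<Sum>m<M. euler_coeff q k n j m * qnum q x ^ (m + j)))
    \<le> nv (1 - q) ^ M"
proof -
  define X where "X = qnum q x"
  define t where "t = (1 - q) * X"
  define d where "d j = of_nat (j choose k) * of_nat (n choose j) * X ^ j * (- q) ^ (j - k)" for j
  have nv_t: "nv t \<le> nv (1 - q)"
    using nv_1_minus_q_powi_le[of x] q_neq_1 unfolding t_def X_def by (simp add: one_minus_powi_eq_qnum)
  have nv_d: "nv (d j) \<le> 1" for j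
    unfolding d_def using nv_of_nat_le_1 nv_qnum_le_1 nv_nonneg
    by (simp add: nv_mult X_def mult_le_one power_le_one)
  have powi: "q powi x = 1 - t"
    unfolding t_def X_def one_minus_powi_eq_qnum[OF q_neq_1, symmetric] by simp
  have "qBernstein k n x q - (\<Sum>j=k..n. \<Sum>m<M. euler_coeff q k n j m * X ^ (m + j))
      = (\<Sum>j=k..n. d j * (inverse ((1 - t) ^ (j - k)) - neg_binomial_sum t (j - k) M))"
    unfolding qBernstein_expand[OF assms q_neq_0 q_neq_1] sum_euler_coeff sum_subtractf[symmetric]
      X_def[symmetric] t_def[symmetric] powi
    by (intro sum.cong) (simp_all add: d_def power_inverse right_diff_distrib mult_ac)
  also have "nv \<dots> \<le> nv t ^ M"
  proof (rule nv_sum_le)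
    fix j
    have "nv (inverse ((1 - t) ^ (j - k)) - neg_binomial_sum t (j - k) M) \<le> nv t ^ M"
      using nv_inverse_power_minus_neg_binomial_sum nv_t nv_1_minus_q_less_1 by simp
    then show "nv (d j * (inverse ((1 - t) ^ (j - k)) - neg_binomial_sum t (j - k) M)) \<le> nv t ^ M"
      using nv_d[of j] nv_nonneg by (simp add: nv_mult mult_le_one) (metis mult_left_le_one_le order_trans)
  qed (simp add: nv_nonneg)
  also have "\<dots> \<le> nv (1 - q) ^ M"
    using nv_t nv_nonneg by (simp add: power_mono)
  finally show ?thesis
    unfolding X_def .
qed

end

section \<open>Fermionic Riemann sums\<close>

definition fermionic_sum :: "nat \<Rightarrow> (int \<Rightarrow> 'a::field) \<Rightarrow> nat \<Rightarrow> 'a" where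
  "fermionic_sum p f K = (\<Sum>x<p ^ K. f (int x) * (-1) ^ x)"

lemma fermionic_int_eq_av_lim: "fermionic_int p nv f = av_lim nv (fermionic_sum p f)"
  unfolding fermionic_int_def fermionic_sum_def ..

lemma fermionic_sum_sum:
  "fermionic_sum p (\<lambda>x. \<Sum>i\<in>A. f i x) K = (\<Sum>i\<in>A. fermionic_sum p (f i) K)"
  unfolding fermionic_sum_def sum_distrib_right by (rule sum.swap)

lemma fermionic_sum_mult_left: "fermionic_sum p (\<lambda>x. c * f x) K = c * fermionic_sum p f K"
  unfolding fermionic_sum_def sum_distrib_left by (simp add: mult_ac)

lemma fermionic_sum_diff:
  "fermionic_sum p (\<lambda>x. f x - g x) K = fermionic_sum p f K - fermionic_sum p g K"
  unfolding fermionic_sum_def by (simp add: left_diff_distrib sum_subtractf)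

lemma sum_lessThan_mult:
  fixes g :: "nat \<Rightarrow> 'a::comm_monoid_add"
  shows "(\<Sum>x<a * b. g x) = (\<Sum>i<b. \<Sum>y<a. g (a * i + y))"
  using sum.nat_group[of "\<lambda>x. g x" a b, symmetric]
  by (simp add: sum.atLeastLessThan_shift_0[of _ "_ * a"] atLeast0LessThan mult.commute add.commute)

lemma sum_alternating_odd: "odd p \<Longrightarrow> (\<Sum>i<p. (-1::'a::comm_ring_1) ^ i) = 1"
proof -
  have pairs: "(\<Sum>i<2 * r. (-1::'a) ^ i) = 0" for r
    by (induction r) (simp_all add: power_add)
  assume "odd p"
  then obtain r where "p = 2 * r + 1"
    by (metis oddE)
  then show ?thesis
    using pairs[of r] by simp
qed

text \<open>Splitting x < p^(K+1) as x = y + p^K i with y < p^K and i < p: since p is odd,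
  (-1)^x = (-1)^y (-1)^i and the alternating sum over i of a constant returns that constant.\<close>

lemma fermionic_sum_Suc_diff:
  assumes "odd p"
  shows "fermionic_sum p f (Suc K) - fermionic_sum p f K
    = (\<Sum>y<p ^ K. (-1) ^ y * (\<Sum>i<p. (-1) ^ i * (f (int y + int (p ^ K * i)) - f (int y))))"
proof -
  define a where "a = p ^ K"
  have "odd a"
    unfolding a_def using assms by simp
  then have sign: "(-1::'a) ^ (a * i + y) = (-1) ^ i * (-1) ^ y" for i y
    by (simp add: power_add power_mult)
  have "fermionic_sum p f (Suc K) = (\<Sum>i<p. \<Sum>y<a. f (int (a * i + y)) * (-1) ^ (a * i + y))"
    unfolding fermionic_sum_def a_def power_Suc2 by (rule sum_lessThan_mult)
  also have "\<dots> = (\<Sum>y<a. (-1) ^ y * (\<Sum>i<p. (-1) ^ i * f (int y + int (a * i))))"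
    unfolding sign sum_distrib_left by (subst sum.swap) (simp add: mult_ac add_ac)
  finally have "fermionic_sum p f (Suc K) = \<dots>" .
  moreover have "(\<Sum>i<p. (-1) ^ i * c) = c" for c :: 'a
    by (simp add: sum_distrib_right[symmetric] sum_alternating_odd[OF assms])
  then have "fermionic_sum p f K = (\<Sum>y<a. (-1) ^ y * (\<Sum>i<p. (-1) ^ i * f (int y)))"
    unfolding fermionic_sum_def a_def by (simp add: mult.commute)
  ultimately show ?thesis
    unfolding a_def by (simp add: sum_subtractf[symmetric] right_diff_distrib[symmetric])
qed

context ultrametric_abs
begin

lemma nv_fermionic_sum_le:
  assumes "\<And>x. nv (f x) \<le> b" and "0 \<le> b"
  shows "nv (fermionic_sum p f K) \<le> b"
  unfolding fermionic_sum_def by (intro nv_sum_le) (auto simp: nv_mult assms)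

lemma fermionic_sum_tendsto:
  assumes "odd p" and "0 \<le> c" and "0 \<le> \<rho>" and "\<rho> < 1"
    and "\<And>K y i. nv (f (int y + int (p ^ K * i)) - f (int y)) \<le> c * \<rho> ^ K"
  shows "av_tendsto nv (fermionic_sum p f) (fermionic_int p nv f)"
proof -
  have "nv (fermionic_sum p f (Suc K) - fermionic_sum p f K) \<le> c * \<rho> ^ K" for K
    unfolding fermionic_sum_Suc_diff[OF assms(1)]
    using assms(2,3,5) by (intro nv_sum_le) (auto simp: nv_mult intro!: nv_sum_le)
  then obtain L where L: "av_tendsto nv (fermionic_sum p f) L"
    using av_tendsto_geometric[of "fermionic_sum p f" c \<rho>] assms(2-4) by blast
  then show ?thesis
    unfolding fermionic_int_eq_av_lim by (simp add: av_lim_eq)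
qed

end

locale padic_abs = ultrametric_abs nv for nv :: "'a::field \<Rightarrow> real" +
  fixes p :: nat
  assumes prime_p: "prime p" and nv_p: "nv (of_nat p) = 1 / real p"
begin

lemma nv_of_nat_choose_prime:
  assumes "0 < i" and "i < p"
  shows "nv (of_nat (p choose i)) \<le> 1 / real p"
proof -
  obtain m where m: "p choose i = p * m"
    using dvd_choose_prime[of i p] assms prime_p by (auto elim: dvdE)
  then show ?thesis
    using nv_of_nat_le_1[of m] prime_gt_0_nat[OF prime_p]
    by (simp add: nv_mult nv_p divide_le_cancel)
qed

text \<open>Since p divides (p choose i) for 0 < i < p, every term of (1 + v)^p - 1 except v^p
  carries the factor 1/p.\<close>

lemma nv_power_prime_minus_1_le:
  assumes "nv v \<le> 1"
  shows "nv ((1 + v) ^ p - 1) \<le> max (1 / real p) (nv v ^ (p - 1)) * nv v"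
proof -
  define \<sigma> where "\<sigma> = max (1 / real p) (nv v ^ (p - 1))"
  have "p \<ge> 2"
    using prime_ge_2_nat[OF prime_p] .
  have "(1 + v) ^ p = (\<Sum>i\<le>Suc (p - 1). of_nat (p choose i) * v ^ i)"
    using binomial_ring[of v 1 p] \<open>p \<ge> 2\<close> by (simp add: add.commute)
  also have "\<dots> = 1 + (\<Sum>i\<le>p - 1. of_nat (p choose Suc i) * v ^ Suc i)"
    by (subst sum.atMost_Suc_shift) simp
  finally have "nv ((1 + v) ^ p - 1) = nv (\<Sum>i\<le>p - 1. of_nat (p choose Suc i) * v ^ Suc i)"
    by simp
  also have "\<dots> \<le> \<sigma> * nv v"
  proof (rule nv_sum_le)
    fix i
    assume "i \<in> {..p - 1}"
    then consider "Suc i = p" | "0 < Suc i" "Suc i < p"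
      using \<open>p \<ge> 2\<close> by fastforce
    then show "nv (of_nat (p choose Suc i) * v ^ Suc i) \<le> \<sigma> * nv v"
    proof cases
      case 1
      then have "nv (of_nat (p choose Suc i) * v ^ Suc i) = nv v ^ (p - 1) * nv v"
        unfolding 1[symmetric] by (simp add: nv_mult mult.commute)
      then show ?thesis
        unfolding \<sigma>_def using nv_nonneg[of v] by (simp add: mult_right_mono)
    next
      case 2
      have "nv v ^ Suc i \<le> nv v"
        using assms nv_nonneg[of v] by (simp add: power_le_one mult_left_le)
      then have "nv (of_nat (p choose Suc i)) * nv v ^ Suc i \<le> 1 / real p * nv v"
        using nv_of_nat_choose_prime[OF 2] nv_nonneg by (intro mult_mono) simp_all
      also have "\<dots> \<le> \<sigma> * nv v"
        unfolding \<sigma>_def using nv_nonneg[of v] by (intro mult_right_mono) simp_all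
      finally show ?thesis
        by (simp add: nv_mult)
    qed
  qed (simp add: \<sigma>_def nv_nonneg max.coboundedI1)
  finally show ?thesis
    unfolding \<sigma>_def .
qed

end

section \<open>The q-Euler numbers and the integral of the q-Bernstein polynomials\<close>

lemma qnum_add_of_nat: "qnum q (int y + int s) - qnum q (int y) = q ^ y * qnum q (int s)"
proof -
  have "qnum q (int y + int s) - qnum q (int y) = ((1 - q ^ (y + s)) - (1 - q ^ y)) / (1 - q)"
    unfolding qnum_def of_nat_add[symmetric] power_int_of_nat by (rule diff_divide_distrib[symmetric])
  also have "\<dots> = q ^ y * ((1 - q ^ s) / (1 - q))"
    by (simp add: power_add algebra_simps)
  finally show ?thesis
    unfolding qnum_def power_int_of_nat .
qed

lemma qnum_of_nat_mult: "qnum q (int (a * i)) = qnum q (int a) * (\<Sum>s<i. (q ^ a) ^ s)"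
  unfolding qnum_def power_int_of_nat power_mult one_diff_power_eq[of "q ^ a" i] by simp

locale padic_q = padic_abs nv p + ultrametric_q nv q
  for nv :: "'a::field \<Rightarrow> real" and p q +
  assumes odd_p: "odd p"
begin

definition \<rho> :: real where
  "\<rho> = max (1 / real p) (nv (1 - q) ^ (p - 1))"

lemma \<rho>_nonneg: "0 \<le> \<rho>"
  unfolding \<rho>_def by (simp add: max.coboundedI1)

lemma \<rho>_less_1: "\<rho> < 1"
proof -
  have "p \<noteq> 2"
    using odd_p by auto
  then have "p \<ge> 3"
    using prime_ge_2_nat[OF prime_p] by linarith
  then show ?thesis
    unfolding \<rho>_def using nv_1_minus_q_less_1 nv_nonneg[of "1 - q"]
    by (simp add: power_less_one_iff)
qed

lemma nv_1_minus_q_power_prime_power_le: "nv (1 - q ^ (p ^ K)) \<le> nv (1 - q) * \<rho> ^ K"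
proof (induction K)
  case (Suc K)
  define v where "v = q ^ (p ^ K) - 1"
  have "nv v \<le> nv (1 - q) * \<rho> ^ K"
    using Suc nv_diff_commute[of 1 "q ^ p ^ K"] unfolding v_def by simp
  also have "\<dots> \<le> nv (1 - q)"
    using \<rho>_nonneg \<rho>_less_1 nv_nonneg[of "1 - q"] by (simp add: mult_left_le power_le_one)
  finally have v: "nv v \<le> nv (1 - q)" .
  then have "max (1 / real p) (nv v ^ (p - 1)) \<le> \<rho>"
    unfolding \<rho>_def using nv_nonneg[of v] by (intro max.mono power_mono) simp_all
  moreover have "nv (1 - q ^ p ^ Suc K) = nv ((1 + v) ^ p - 1)"
    unfolding v_def power_Suc2 power_mult using nv_diff_commute by simp
  ultimately have "nv (1 - q ^ p ^ Suc K) \<le> \<rho> * nv v"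
    using nv_power_prime_minus_1_le[of v] v nv_1_minus_q_less_1 nv_nonneg[of v]
    by (smt (verit) mult_right_mono)
  also have "\<dots> \<le> \<rho> * (nv (1 - q) * \<rho> ^ K)"
    using \<open>nv v \<le> nv (1 - q) * \<rho> ^ K\<close> \<rho>_nonneg by (rule mult_left_mono)
  finally show ?case
    by (simp add: mult_ac)
qed simp

lemma nv_qnum_prime_power_le: "nv (qnum q (int (p ^ K))) \<le> \<rho> ^ K"
  using nv_1_minus_q_power_prime_power_le[of K] nv_1_minus_q_pos
  unfolding qnum_def power_int_of_nat by (simp add: nv_divide divide_le_eq mult.commute)

lemma qEuler_tendsto: "av_tendsto nv (fermionic_sum p (\<lambda>x. qnum q x ^ n)) (qEuler p nv q n)"
  unfolding qEuler_def
proof (rule fermionic_sum_tendsto[OF odd_p _ \<rho>_nonneg \<rho>_less_1, of 1])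
  fix K y i
  have "nv (qnum q (int y + int (p ^ K * i)) ^ n - qnum q (int y) ^ n)
      \<le> nv (qnum q (int y + int (p ^ K * i)) - qnum q (int y))"
    by (rule nv_power_diff_le[OF nv_qnum_le_1 nv_qnum_le_1])
  also have "\<dots> = nv (qnum q (int (p ^ K * i)))"
    by (simp only: qnum_add_of_nat nv_mult nv_power nv_q power_one mult_1)
  also have "\<dots> \<le> nv (qnum q (int (p ^ K)))"
  proof -
    have "nv (\<Sum>s<i. (q ^ p ^ K) ^ s) \<le> 1"
      by (rule nv_sum_le) auto
    then show ?thesis
      unfolding qnum_of_nat_mult nv_mult using nv_nonneg by (simp add: mult_left_le)
  qed
  also have "\<dots> \<le> \<rho> ^ K"
    by (rule nv_qnum_prime_power_le)
  finally show "nv (qnum q (int y + int (p ^ K * i)) ^ n - qnum q (int y) ^ n) \<le> 1 * \<rho> ^ K"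
    by simp
qed simp

lemma nv_qEuler_le_1: "nv (qEuler p nv q n) \<le> 1"
  using av_tendsto_dist_le[OF qEuler_tendsto[of n], of 0 0 1]
  by (simp add: nv_fermionic_sum_le nv_qnum_le_1 power_le_one nv_nonneg)

lemma nv_euler_coeff_le: "nv (euler_coeff q k n j m) \<le> nv (1 - q) ^ m"
proof -
  have "nv (euler_coeff q k n j m) = nv (of_nat (j choose k)) * nv (of_nat (n choose j))
      * nv (of_nat ((j - k + m - 1) choose m)) * nv (1 - q) ^ m"
    unfolding euler_coeff_def using nv_diff_commute[of q 1] by (simp add: nv_mult)
  also have "\<dots> \<le> nv (1 - q) ^ m"
    using nv_of_nat_le_1 nv_nonneg by (simp add: mult_le_one mult_left_le_one_le)
  finally show ?thesis .
qed

theorem fermionic_int_qBernstein: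
  assumes "k \<le> n"
  shows "fermionic_int p nv (\<lambda>x. qBernstein k n x q)
    = (\<Sum>j=k..n. av_suminf nv (\<lambda>m. euler_coeff q k n j m * qEuler p nv q (m + j)))"
proof -
  define r where "r = nv (1 - q)"
  have r: "0 \<le> r" "r < 1"
    unfolding r_def using nv_nonneg nv_1_minus_q_less_1 by auto
  define S where "S j = av_suminf nv (\<lambda>m. euler_coeff q k n j m * qEuler p nv q (m + j))" for j
  define T where "T M x = (\<Sum>j=k..n. \<Sum>m<M. euler_coeff q k n j m * qnum q x ^ (m + j))" for M x
  have tail: "nv (S j - (\<Sum>m<M. euler_coeff q k n j m * qEuler p nv q (m + j))) \<le> 1 * r ^ M" for j M
    unfolding S_def using r
  proof (intro av_suminf_geometric)
    show "nv (euler_coeff q k n j m * qEuler p nv q (m + j)) \<le> 1 * r ^ m" for m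
      using nv_euler_coeff_le[of k n j m] nv_qEuler_le_1[of "m + j"] nv_nonneg
      unfolding r_def by (simp add: nv_mult mult_le_one) (metis mult_left_le order_trans)
  qed auto
  have "av_tendsto nv (fermionic_sum p (\<lambda>x. qBernstein k n x q)) (\<Sum>j=k..n. S j)"
  proof (rule av_tendsto_uniform_approx[where g = "\<lambda>M. fermionic_sum p (T M)" and \<epsilon> = "\<lambda>M. r ^ M"])
    show "nv (fermionic_sum p (\<lambda>x. qBernstein k n x q) K - fermionic_sum p (T M) K) \<le> r ^ M" for M K
      unfolding fermionic_sum_diff[symmetric] T_def r_def
      using nv_qBernstein_minus_truncation_le[OF assms] nv_nonneg by (intro nv_fermionic_sum_le) simp_all
    show "av_tendsto nv (fermionic_sum p (T M)) (\<Sum>j=k..n. \<Sum>m<M. euler_coeff q k n j m * qEuler p nv q (m + j))" for M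
      unfolding T_def fermionic_sum_sum fermionic_sum_mult_left
      by (intro av_tendsto_sum av_tendsto_mult_left qEuler_tendsto)
    show "nv ((\<Sum>j=k..n. S j) - (\<Sum>j=k..n. \<Sum>m<M. euler_coeff q k n j m * qEuler p nv q (m + j))) \<le> r ^ M" for M
      unfolding sum_subtractf[symmetric] using tail r by (intro nv_sum_le) simp_all
    show "\<exists>M. r ^ M < e" if "e > 0" for e
      using real_arch_pow_inv[OF that] r by (cases "r = 0") auto
  qed
  then show ?thesis
    unfolding fermionic_int_eq_av_lim S_def by (rule av_lim_eq)
qed

end

lemma gchoose_of_int_eq_choose:
  "((of_int (int l + int m - 1) :: 'a::field_char_0) gchoose m) = of_nat ((l + m - 1) choose m)"
proof (cases "l + m = 0")
  case False
  then have "int l + int m - 1 = int (l + m - 1)"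
    by linarith
  then show ?thesis
    by (metis binomial_gbinomial of_int_of_nat_eq)
qed simp

theorem mainTheorem9:
  fixes p :: nat and nv :: "'a::field_char_0 \<Rightarrow> real" and q :: 'a and k n :: nat
  assumes "prime p" and "odd p"
    and "is_Cp_abs p nv"
    and "q \<noteq> 1"
    and "nv (1 - q) < real p powr (-1 / (real p - 1))"
    and "k \<le> n"
  shows "fermionic_int p nv (\<lambda>x. qBernstein k n x q) =
    (\<Sum>j=k..n. av_suminf nv (\<lambda>m.
        of_nat (j choose k) * of_nat (n choose j)
        * ((of_int (int j - int k + int m - 1) :: 'a) gchoose m)
        * (-1) ^ (j - k + m) * q ^ (j - k) * (q - 1) ^ m * qEuler p nv q (m + j)))"
proof -
  have "real p powr (-1 / (real p - 1)) < 1"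
    using prime_ge_2_nat[OF assms(1)] by (intro powr_less_one) auto
  then have "nv (1 - q) < 1"
    using assms(5) by linarith
  then interpret padic_q nv p q
    using assms(1-4) unfolding is_Cp_abs_def by unfold_locales auto
  have "euler_coeff q k n j m = of_nat (j choose k) * of_nat (n choose j)
      * ((of_int (int j - int k + int m - 1) :: 'a) gchoose m) * (-1) ^ (j - k + m) * q ^ (j - k) * (q - 1) ^ m"
    if "k \<le> j" for j m
  proof -
    have "((of_int (int j - int k + int m - 1) :: 'a) gchoose m) = of_nat ((j - k + m - 1) choose m)"
      using gchoose_of_int_eq_choose[of "j - k" m] that by (simp add: of_nat_diff)
    then show ?thesis
      unfolding euler_coeff_def by simp
  qed
  then show ?thesis
    unfolding fermionic_int_qBernstein[OF assms(6)] by (intro sum.cong refl) (simp add: mult_ac)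
qed

end
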